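(* Let $n\ge 4$, let $r_1,r_2,r_3\in\mathbb{Z}_+$ with $r_1+r_2+r_3=n-1$, and let $\alpha_1,\alpha_2,\alpha_3$ be reals with $-1<\alpha_1<1$, $0\le\alpha_2,\alpha_3<1$, $\alpha_1+\alpha_2+\alpha_3=1$, $r_1+\alpha_1\ge r_2+\alpha_2$ and $r_1+\alpha_1\ge r_3+\alpha_3$. Then $$\mathfrak{L}_n(r_1,r_2,r_3,\alpha_1,\alpha_2,\alpha_3)\le \mathfrak{L}_n(n-1,0,0,\alpha_1,\alpha_2,\alpha_3)+2^{2n/3}(10+2\ln n).$$
   Context: Points of a triangle are identified with barycentric coordinates $\lambda=(\lambda_1,\lambda_2,\lambda_3)$, $\lambda_r\ge0$, $\sum\lambda_r=1$. For an integer $n\ge1$ let $I=\{i=(i_1,i_2,i_3)\in\mathbb{Z}_+^3: i_1+i_2+i_3=n\}$, and let $l_i(\lambda)=\prod_{s=1}^{3}\frac{1}{i_s!}\prod_{t=0}^{i_s-1}(n\lambda_s-t)$ (the Lagrange fundamental polynomials for the equally spaced nodes $i/n$, $i\in I$). The Lebesgue function is $\mathcal{L}_n(\lambda)=\sum_{i\in I}|l_i(\lambda)|$. For $r_s\in\mathbb{Z}_+$ with $r_1+r_2+r_3=n-1$ and reals $\alpha_s$ with $\alpha_1+\alpha_2+\alpha_3=1$, write $\mathfrak{L}_n(r_1,r_2,r_3,\alpha_1,\alpha_2,\alpha_3)=\mathcal{L}_n(\lambda)$ where $\lambda_s=(r_s+\alpha_s)/n$, $s=1,2,3$. *)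

theory Defs
  imports Complex_Main
begin

definition idx :: "nat \<Rightarrow> (nat \<times> nat \<times> nat) set" where
  "idx n = {(i1, i2, i3). i1 + i2 + i3 = n}"

definition lfac :: "nat \<Rightarrow> nat \<Rightarrow> real \<Rightarrow> real" where
  "lfac n k x = (1 / fact k) * (\<Prod>t<k. (real n * x - real t))"

text \<open>Lagrange fundamental polynomial l_i at barycentric point (x1,x2,x3).\<close>
definition lagr :: "nat \<Rightarrow> nat \<times> nat \<times> nat \<Rightarrow> real \<Rightarrow> real \<Rightarrow> real \<Rightarrow> real" where
  "lagr n i x1 x2 x3 = (case i of (i1, i2, i3) \<Rightarrow> lfac n i1 x1 * lfac n i2 x2 * lfac n i3 x3)"

definition lebesgue :: "nat \<Rightarrow> real \<Rightarrow> real \<Rightarrow> real \<Rightarrow> real" where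
  "lebesgue n x1 x2 x3 = (\<Sum>i\<in>idx n. \<bar>lagr n i x1 x2 x3\<bar>)"

definition frakL :: "nat \<Rightarrow> nat \<Rightarrow> nat \<Rightarrow> nat \<Rightarrow> real \<Rightarrow> real \<Rightarrow> real \<Rightarrow> real" where
  "frakL n r1 r2 r3 a1 a2 a3 =
     lebesgue n ((real r1 + a1) / real n) ((real r2 + a2) / real n) ((real r3 + a3) / real n)"

lemma finite_idx: "finite (idx n)"
proof -
  have "idx n \<subseteq> {..n} \<times> {..n} \<times> {..n}" by (auto simp: idx_def)
  thus ?thesis by (rule finite_subset) auto
qed

end

theory Submission
  imports Defs
begin

text \<open>Since \<open>l\<^sub>i(\<lambda>) = \<Prod>\<^sub>s (n \<lambda>\<^sub>s gchoose i\<^sub>s)\<close>, the Lebesgue function at the scaled point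
  \<open>(z, y, w) = n \<lambda>\<close> is the sum of \<open>|z gchoose a| |y gchoose b| |w gchoose c|\<close> over \<open>a + b + c = n\<close>.
  Moving one unit from \<open>y\<close> to the largest coordinate \<open>z \<in> [K, K + 1)\<close> changes this sum only
  through Pascal's rule, and the triangle inequality is lossy only at the terms
  \<open>|z gchoose i|\<close> with \<open>i \<ge> K + 2\<close>, whose total is at most \<open>1 / (4 K)\<close>. Moving all of \<open>r\<^sub>2\<close>
  and then all of \<open>r\<^sub>3\<close> onto the first coordinate therefore costs at most \<open>2 ^ (r\<^sub>2 + r\<^sub>3)\<close> times
  a factor of order \<open>n / K\<close>, and \<open>K \<ge> (n - 2) / 3\<close> because \<open>r\<^sub>1 + \<alpha>\<^sub>1\<close> is the largest coordinate.\<close>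

lemma gbinomial_Suc_eq_mult: "(y::real) gchoose (Suc k) = (y gchoose k) * (y - real k) / (real k + 1)"
proof -
  have "fact (Suc k) * (y gchoose Suc k) = (fact k * (y gchoose k)) * (y - real k)"
    unfolding gbinomial_mult_fact by (simp add: prod.atLeast0_lessThan_Suc)
  then have "fact k * ((y gchoose Suc k) * (real k + 1)) = fact k * ((y gchoose k) * (y - real k))"
    by (simp add: algebra_simps)
  then have "(y gchoose Suc k) * (real k + 1) = (y gchoose k) * (y - real k)"
    by (metis fact_nonzero mult_left_cancel)
  then show ?thesis by (simp add: field_simps)
qed

lemma abs_gbinomial_Suc: "\<bar>(y::real) gchoose (Suc k)\<bar> = \<bar>y gchoose k\<bar> * \<bar>y - real k\<bar> / (real k + 1)"
  by (simp add: gbinomial_Suc_eq_mult abs_mult)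

lemma gbinomial_nonneg: "real K \<le> y \<Longrightarrow> k \<le> K + 1 \<Longrightarrow> 0 \<le> (y::real) gchoose k"
proof (induction k)
  case (Suc k)
  then show ?case by (simp add: gbinomial_Suc_eq_mult)
qed simp

lemma abs_gbinomial_le_binomial:
  assumes "real F \<le> x" "x < real F + 1" "k \<le> F + 1"
  shows "\<bar>x gchoose k\<bar> \<le> real ((F + 1) choose k)"
  using assms(3)
proof (induction k)
  case (Suc k)
  have ih: "\<bar>x gchoose k\<bar> \<le> real (F + 1) gchoose k"
    using Suc by (simp add: binomial_gbinomial)
  have x: "0 \<le> x - real k" "x - real k \<le> real (F + 1) - real k" using Suc.prems assms by auto
  have "\<bar>x gchoose Suc k\<bar> = \<bar>x gchoose k\<bar> * (x - real k) / (real k + 1)"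
    using x by (simp add: abs_gbinomial_Suc)
  also have "\<dots> \<le> (real (F + 1) gchoose k) * (real (F + 1) - real k) / (real k + 1)"
    using gbinomial_nonneg[of "F + 1" "real (F + 1)" k] Suc.prems
    by (intro divide_right_mono mult_mono ih x) auto
  also have "\<dots> = real (F + 1) gchoose Suc k"
    by (rule gbinomial_Suc_eq_mult[symmetric])
  also have "\<dots> = real ((F + 1) choose Suc k)"
    by (rule binomial_gbinomial[symmetric])
  finally show ?case .
qed simp

lemma abs_gbinomial_le_one:
  assumes "real F \<le> x" "x < real F + 1" "F + 1 \<le> k"
  shows "\<bar>x gchoose k\<bar> \<le> 1"
  using assms(3)
proof (induction k rule: dec_induct)
  case base
  show ?case using abs_gbinomial_le_binomial[OF assms(1,2), of "F + 1"] by simp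
next
  case (step k)
  have "\<bar>x - real k\<bar> \<le> real k + 1" using assms step by auto
  then have "\<bar>x gchoose k\<bar> * \<bar>x - real k\<bar> / (real k + 1) \<le> 1 * (real k + 1) / (real k + 1)"
    by (intro divide_right_mono mult_mono step) auto
  then show ?case by (simp add: abs_gbinomial_Suc)
qed

lemma abs_gbinomial_le_binomial_plus_one:
  assumes "real F \<le> x" "x < real F + 1"
  shows "\<bar>x gchoose k\<bar> \<le> real ((F + 1) choose k) + 1"
  using abs_gbinomial_le_binomial[OF assms, of k] abs_gbinomial_le_one[OF assms, of k]
  by (cases "k \<le> F + 1") auto

lemma abs_gbinomial_le_pow2:
  assumes "real F \<le> x" "x < real F + 1"
  shows "\<bar>x gchoose k\<bar> \<le> 2 ^ (F + 1)"
proof (cases "k \<le> F + 1")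
  case True
  have "real ((F + 1) choose k) \<le> 2 ^ (F + 1)"
    using binomial_le_pow2[of "F + 1" k] by (metis of_nat_le_iff of_nat_numeral of_nat_power)
  then show ?thesis using abs_gbinomial_le_binomial[OF assms True] by linarith
next
  case False
  then have "\<bar>x gchoose k\<bar> \<le> 1" using abs_gbinomial_le_one[OF assms, of k] by simp
  also have "(1::real) \<le> 2 ^ (F + 1)" by (rule one_le_power) simp
  finally show ?thesis .
qed

lemma abs_gbinomial_add2_le:
  assumes "real K \<le> z" "z < real K + 1"
  shows "\<bar>z gchoose (K + 2)\<bar> \<le> 1 / (4 * (real K + 2))"
proof -
  have quarter: "(z - real K) * (real K + 1 - z) \<le> 1/4"
    using zero_le_square[of "2 * z - 2 * real K - 1"] by (simp add: algebra_simps)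
  have "\<bar>z gchoose (K + 2)\<bar> = \<bar>z gchoose K\<bar> * ((z - real K) * (real K + 1 - z)) / ((real K + 1) * (real K + 2))"
    using assms by (simp add: numeral_2_eq_2 abs_gbinomial_Suc abs_of_nonneg abs_of_neg field_simps)
  also have "\<dots> \<le> (real K + 1) * (1/4) / ((real K + 1) * (real K + 2))"
    using abs_gbinomial_le_binomial[OF assms, of K] assms
    by (intro divide_right_mono mult_mono quarter) auto
  also have "\<dots> = 1 / (4 * (real K + 2))"
    by (simp only: mult_divide_mult_cancel_left_if) simp
  finally show ?thesis .
qed

text \<open>For \<open>i \<ge> K + 1\<close> the ratio \<open>|z gchoose (i + 1)| / |z gchoose i| = (i - z) / (i + 1)\<close> is at
  most \<open>(i - K) / (i + 1)\<close>, which makes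
  \<open>K (|z gchoose (K + 2)| + \<dots> + |z gchoose m|) + (m - K) |z gchoose m|\<close> decrease in \<open>m\<close>.\<close>

lemma sum_abs_gbinomial_tail_le:
  assumes "1 \<le> K" "real K \<le> z" "z < real K + 1"
  shows "(\<Sum>i = K + 2..m. \<bar>z gchoose i\<bar>) \<le> 1 / (4 * real K)"
proof (cases "K + 2 \<le> m")
  case True
  define u where "u i = \<bar>z gchoose i\<bar>" for i
  have ratio: "(real i + 1) * u (Suc i) \<le> (real i - real K) * u i" if "K + 1 \<le> i" for i
  proof -
    have "\<bar>z - real i\<bar> \<le> real i - real K" using that assms by auto
    then show ?thesis
      unfolding u_def abs_gbinomial_Suc by (simp add: mult.commute mult_left_mono)
  qed
  have telescope: "real K * (\<Sum>i = K + 2..j. u i) + (real j - real K) * u j \<le> (real K + 2) * u (K + 2)"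
    if "K + 2 \<le> j" for j
    using that
  proof (induction j rule: dec_induct)
    case (step j)
    have "(\<Sum>i = K + 2..Suc j. u i) = (\<Sum>i = K + 2..j. u i) + u (Suc j)"
      using step.hyps by simp
    then show ?case using step.IH ratio[of j] step.hyps by (simp add: algebra_simps)
  qed (simp add: algebra_simps)
  have "0 \<le> (real m - real K) * u m" using True by (simp add: u_def)
  then have "real K * (\<Sum>i = K + 2..m. u i) \<le> (real K + 2) * u (K + 2)"
    using telescope[OF True] by linarith
  also have "\<dots> \<le> (real K + 2) * (1 / (4 * (real K + 2)))"
    unfolding u_def using abs_gbinomial_add2_le[OF assms(2,3)] by (intro mult_left_mono) auto
  also have "\<dots> = 1/4" by (simp add: field_simps)
  finally show ?thesis using assms(1) unfolding u_def by (simp add: field_simps)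
qed simp

definition gchoose_conv :: "real \<Rightarrow> real \<Rightarrow> nat \<Rightarrow> real" where
  "gchoose_conv z y m = (\<Sum>i\<le>m. \<bar>z gchoose i\<bar> * \<bar>y gchoose (m - i)\<bar>)"

definition lebesgue_scaled :: "nat \<Rightarrow> real \<Rightarrow> real \<Rightarrow> real \<Rightarrow> real" where
  "lebesgue_scaled n z y w =
     (\<Sum>(a, b, c)\<in>idx n. \<bar>z gchoose a\<bar> * \<bar>y gchoose b\<bar> * \<bar>w gchoose c\<bar>)"

lemma sum_idx_eq_nested: "(\<Sum>i\<in>idx n. f i) = (\<Sum>k\<le>n. \<Sum>i\<le>n - k. f (i, n - k - i, k))"
proof -
  have "(\<Sum>k\<le>n. \<Sum>i\<le>n - k. f (i, n - k - i, k))
      = (\<Sum>(k, i)\<in>(SIGMA k:{..n}. {..n - k}). f (i, n - k - i, k))"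
    by (rule sum.Sigma) auto
  also have "\<dots> = (\<Sum>i\<in>idx n. f i)"
    by (rule sum.reindex_bij_witness[where i="\<lambda>(a, b, c). (c, a)" and j="\<lambda>(k, i). (i, n - k - i, k)"])
       (auto simp: idx_def)
  finally show ?thesis by simp
qed

lemma lebesgue_scaled_eq_conv:
  "lebesgue_scaled n z y w = (\<Sum>k\<le>n. \<bar>w gchoose k\<bar> * gchoose_conv z y (n - k))"
  unfolding lebesgue_scaled_def gchoose_conv_def sum_idx_eq_nested
  by (simp add: sum_distrib_left algebra_simps)

lemma lebesgue_scaled_commute: "lebesgue_scaled n z y w = lebesgue_scaled n z w y"
  unfolding lebesgue_scaled_def
  by (rule sum.reindex_bij_witness[where i="\<lambda>(a, b, c). (a, c, b)" and j="\<lambda>(a, b, c). (a, c, b)"])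
     (auto simp: idx_def)

lemma lebesgue_eq_lebesgue_scaled:
  "lebesgue n x1 x2 x3 = lebesgue_scaled n (real n * x1) (real n * x2) (real n * x3)"
proof -
  have "lfac n k x = (real n * x) gchoose k" for k x
    by (simp add: lfac_def gbinomial_prod_rev atLeast0LessThan)
  then show ?thesis
    unfolding lebesgue_def lebesgue_scaled_def
    by (intro sum.cong) (auto simp: lagr_def abs_mult)
qed

lemma gchoose_conv_Suc:
  "gchoose_conv z y (Suc m) = (\<Sum>i\<le>m. \<bar>z gchoose i\<bar> * \<bar>y gchoose Suc (m - i)\<bar>) + \<bar>z gchoose Suc m\<bar>"
  unfolding gchoose_conv_def by (simp add: Suc_diff_le)

lemma gchoose_conv_Suc_shift:
  "gchoose_conv z y (Suc m) = \<bar>y gchoose Suc m\<bar> + (\<Sum>i\<le>m. \<bar>z gchoose Suc i\<bar> * \<bar>y gchoose (m - i)\<bar>)"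
  unfolding gchoose_conv_def by (subst sum.atMost_Suc_shift) simp

lemma gchoose_conv_plus1_right_le:
  "gchoose_conv z (y + 1) (Suc m) \<le> gchoose_conv z y (Suc m) + gchoose_conv z y m"
proof -
  have pascal: "\<bar>(y + 1) gchoose Suc j\<bar> \<le> \<bar>y gchoose j\<bar> + \<bar>y gchoose Suc j\<bar>" for j
    by (simp add: gbinomial_Suc_Suc abs_triangle_ineq)
  have "gchoose_conv z (y + 1) (Suc m)
      \<le> (\<Sum>i\<le>m. \<bar>z gchoose i\<bar> * (\<bar>y gchoose (m - i)\<bar> + \<bar>y gchoose Suc (m - i)\<bar>)) + \<bar>z gchoose Suc m\<bar>"
    unfolding gchoose_conv_Suc by (intro add_right_mono sum_mono mult_left_mono pascal) auto
  also have "\<dots> = gchoose_conv z y (Suc m) + gchoose_conv z y m"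
    unfolding gchoose_conv_Suc by (simp add: gchoose_conv_def distrib_left sum.distrib)
  finally show ?thesis .
qed

lemma gchoose_conv_plus1_left_ge:
  assumes "real K \<le> z"
  shows "gchoose_conv z y (Suc m) + gchoose_conv z y m
    \<le> gchoose_conv (z + 1) y (Suc m)
       + 2 * (\<Sum>i\<le>m. (if K + 1 \<le> i then \<bar>z gchoose Suc i\<bar> else 0) * \<bar>y gchoose (m - i)\<bar>)"
proof -
  \<comment> \<open>below \<open>K + 2\<close> both summands of Pascal's rule are nonnegative, so nothing is lost there\<close>
  have pascal: "\<bar>z gchoose i\<bar> + \<bar>z gchoose Suc i\<bar>
      \<le> \<bar>(z + 1) gchoose Suc i\<bar> + 2 * (if K + 1 \<le> i then \<bar>z gchoose Suc i\<bar> else 0)" for i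
    using gbinomial_nonneg[OF assms, of i] gbinomial_nonneg[OF assms, of "Suc i"]
    by (auto simp: gbinomial_Suc_Suc)
  have "gchoose_conv z y (Suc m) + gchoose_conv z y m
      = \<bar>y gchoose Suc m\<bar> + (\<Sum>i\<le>m. (\<bar>z gchoose i\<bar> + \<bar>z gchoose Suc i\<bar>) * \<bar>y gchoose (m - i)\<bar>)"
    unfolding gchoose_conv_Suc_shift by (simp add: gchoose_conv_def distrib_right sum.distrib)
  also have "\<dots> \<le> \<bar>y gchoose Suc m\<bar> + (\<Sum>i\<le>m. (\<bar>(z + 1) gchoose Suc i\<bar>
      + 2 * (if K + 1 \<le> i then \<bar>z gchoose Suc i\<bar> else 0)) * \<bar>y gchoose (m - i)\<bar>)"
    by (intro add_left_mono sum_mono mult_right_mono pascal) auto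
  also have "\<dots> = gchoose_conv (z + 1) y (Suc m)
      + 2 * (\<Sum>i\<le>m. (if K + 1 \<le> i then \<bar>z gchoose Suc i\<bar> else 0) * \<bar>y gchoose (m - i)\<bar>)"
    unfolding gchoose_conv_Suc_shift by (simp add: distrib_right sum.distrib sum_distrib_left mult.assoc)
  finally show ?thesis .
qed

lemma gchoose_conv_tail_le:
  assumes "1 \<le> K" "real K \<le> z" "z < real K + 1" and Y: "\<And>j. \<bar>y gchoose j\<bar> \<le> Y"
  shows "(\<Sum>i\<le>m. (if K + 1 \<le> i then \<bar>z gchoose Suc i\<bar> else 0) * \<bar>y gchoose (m - i)\<bar>)
    \<le> (if K + 1 \<le> m then Y / (4 * real K) else 0)"
proof -
  have "0 \<le> Y" using Y[of 0] by simp
  have "(\<Sum>i\<le>m. (if K + 1 \<le> i then \<bar>z gchoose Suc i\<bar> else 0) * \<bar>y gchoose (m - i)\<bar>)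
      \<le> (\<Sum>i\<le>m. if K + 1 \<le> i then \<bar>z gchoose Suc i\<bar> * Y else 0)"
    by (intro sum_mono) (auto intro: mult_left_mono Y)
  also have "\<dots> = (\<Sum>i\<in>{..m} \<inter> {i. K + 1 \<le> i}. \<bar>z gchoose Suc i\<bar> * Y)"
    by (simp add: sum.inter_restrict)
  also have "{..m} \<inter> {i. K + 1 \<le> i} = {K + 1..m}" by auto
  also have "(\<Sum>i = K + 1..m. \<bar>z gchoose Suc i\<bar> * Y) = Y * (\<Sum>i = K + 1..m. \<bar>z gchoose Suc i\<bar>)"
    by (simp add: sum_distrib_left mult.commute)
  also have "(\<Sum>i = K + 1..m. \<bar>z gchoose Suc i\<bar>) = (\<Sum>i = K + 2..Suc m. \<bar>z gchoose i\<bar>)"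
    using sum.shift_bounds_cl_Suc_ivl[of "\<lambda>i. \<bar>z gchoose i\<bar>" "K + 1" m]
    by (simp only: Suc_eq_plus1 add.assoc one_add_one)
  also have "Y * \<dots> \<le> (if K + 1 \<le> m then Y / (4 * real K) else 0)"
    using mult_left_mono[OF sum_abs_gbinomial_tail_le[OF assms(1-3), of "Suc m"] \<open>0 \<le> Y\<close>] by auto
  finally show ?thesis .
qed

lemma gchoose_conv_move_le:
  assumes "1 \<le> K" "real K \<le> z" "z < real K + 1" "\<And>j. \<bar>y gchoose j\<bar> \<le> Y"
  shows "gchoose_conv z (y + 1) m \<le> gchoose_conv (z + 1) y m + (if K + 2 \<le> m then Y / (2 * real K) else 0)"
proof (cases m)
  case 0
  then show ?thesis by (simp add: gchoose_conv_def)
next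
  case (Suc m')
  then show ?thesis
    using gchoose_conv_plus1_right_le[of z y m'] gchoose_conv_plus1_left_ge[OF assms(2), of y m']
      gchoose_conv_tail_le[OF assms, of m']
    by (auto split: if_splits)
qed

lemma sum_binomial_atMost_le_pow2: "(\<Sum>k\<le>m. n choose k) \<le> 2 ^ n"
proof -
  have "(\<Sum>k\<le>m. n choose k) \<le> (\<Sum>k\<le>m + n. n choose k)"
    by (intro sum_mono2) auto
  also have "\<dots> = (\<Sum>k\<le>n. n choose k)"
    by (rule sum.mono_neutral_right) (auto simp: binomial_eq_0)
  finally show ?thesis by (simp only: choose_row_sum)
qed

lemma sum_abs_gbinomial_count_le:
  assumes "real F \<le> w" "w < real F + 1" "K0 \<le> K" "K0 \<le> n"
  shows "(\<Sum>k\<le>n. if K + 2 \<le> n - k then \<bar>w gchoose k\<bar> else 0) \<le> 2 ^ (F + 1) + (real n - real K0)"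
proof -
  have "(\<Sum>k\<le>n. if K + 2 \<le> n - k then \<bar>w gchoose k\<bar> else 0)
      \<le> (\<Sum>k\<le>n. real ((F + 1) choose k) + (if k < n - K0 then 1 else 0))"
    using abs_gbinomial_le_binomial_plus_one[OF assms(1,2)] assms(3)
    by (intro sum_mono) (auto simp: add_increasing2)
  also have "\<dots> = real (\<Sum>k\<le>n. (F + 1) choose k) + (\<Sum>k\<le>n. if k < n - K0 then 1 else 0)"
    by (simp only: sum.distrib of_nat_sum)
  also have "\<dots> \<le> 2 ^ (F + 1) + (real n - real K0)"
  proof (rule add_mono)
    show "real (\<Sum>k\<le>n. (F + 1) choose k) \<le> 2 ^ (F + 1)"
      using sum_binomial_atMost_le_pow2[of "F + 1" n]
      by (metis of_nat_le_iff of_nat_numeral of_nat_power)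
    have "(\<Sum>k\<le>n. if k < n - K0 then 1 else 0) = (\<Sum>k\<in>{..n} \<inter> {k. k < n - K0}. 1::real)"
      by (subst sum.inter_restrict) auto
    also have "{..n} \<inter> {k. k < n - K0} = {..<n - K0}" by auto
    finally show "(\<Sum>k\<le>n. if k < n - K0 then 1 else 0) \<le> real n - real K0" using assms(4) by simp
  qed
  finally show ?thesis .
qed

lemma lebesgue_scaled_move_le:
  assumes "1 \<le> K0" "K0 \<le> K" "K0 \<le> n" "real K \<le> z" "z < real K + 1"
    and Y: "\<And>j. \<bar>y gchoose j\<bar> \<le> Y" and "real F \<le> w" "w < real F + 1"
  shows "lebesgue_scaled n z (y + 1) w
    \<le> lebesgue_scaled n (z + 1) y w + Y / (2 * real K0) * (2 ^ (F + 1) + (real n - real K0))"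
proof -
  have "1 \<le> K" using assms by simp
  have "0 \<le> Y" using Y[of 0] by simp
  have "lebesgue_scaled n z (y + 1) w
      \<le> (\<Sum>k\<le>n. \<bar>w gchoose k\<bar> * (gchoose_conv (z + 1) y (n - k)
          + (if K + 2 \<le> n - k then Y / (2 * real K) else 0)))"
    unfolding lebesgue_scaled_eq_conv
    by (intro sum_mono mult_left_mono gchoose_conv_move_le \<open>1 \<le> K\<close> assms(4,5) Y) auto
  also have "\<dots> = lebesgue_scaled n (z + 1) y w
      + Y / (2 * real K) * (\<Sum>k\<le>n. if K + 2 \<le> n - k then \<bar>w gchoose k\<bar> else 0)"
    unfolding lebesgue_scaled_eq_conv sum_distrib_left sum.distrib[symmetric]
    by (intro sum.cong) (auto simp: algebra_simps)
  also have "\<dots> \<le> lebesgue_scaled n (z + 1) y w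
      + Y / (2 * real K0) * (2 ^ (F + 1) + (real n - real K0))"
    using assms \<open>0 \<le> Y\<close>
    by (intro add_left_mono mult_mono divide_left_mono sum_abs_gbinomial_count_le sum_nonneg) auto
  finally show ?thesis .
qed

lemma lebesgue_scaled_move_many_le:
  assumes "1 \<le> K0" "K0 \<le> n" "0 \<le> c" "c < 1" "0 \<le> a" "a < 1" "real F \<le> w" "w < real F + 1"
  shows "K0 \<le> K \<Longrightarrow> lebesgue_scaled n (real K + c) (real p + a) w
    \<le> lebesgue_scaled n (real (K + p) + c) a w + 2 ^ p * (2 ^ (F + 1) + (real n - real K0)) / real K0"
proof (induction p arbitrary: K)
  case 0
  then show ?case using assms by simp
next
  case (Suc p)
  define B where "B = 2 ^ (F + 1) + (real n - real K0)"
  have Y: "\<bar>(real p + a) gchoose j\<bar> \<le> 2 ^ (p + 1)" for j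
    by (rule abs_gbinomial_le_pow2) (use assms in auto)
  have "lebesgue_scaled n (real K + c) (real (Suc p) + a) w
      = lebesgue_scaled n (real K + c) ((real p + a) + 1) w"
    by (simp add: add_ac)
  also have "\<dots> \<le> lebesgue_scaled n (real K + c + 1) (real p + a) w + 2 ^ (p + 1) / (2 * real K0) * B"
    unfolding B_def
    by (rule lebesgue_scaled_move_le[OF assms(1) Suc.prems assms(2) _ _ Y assms(7,8)])
       (use assms(3,4) in auto)
  also have "real K + c + 1 = real (K + 1) + c" by simp
  also have "lebesgue_scaled n (real (K + 1) + c) (real p + a) w
      \<le> lebesgue_scaled n (real (K + Suc p) + c) a w + 2 ^ p * B / real K0"
    using Suc.IH[of "K + 1"] Suc.prems unfolding B_def by simp
  also have "2 ^ (p + 1) / (2 * real K0) * B = 2 ^ p * B / real K0"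
    by simp
  finally show ?case unfolding B_def[symmetric] by (simp add: algebra_simps)
qed

lemma two_powr_two_thirds_le: "2 powr (2/3) \<le> (1.6::real)"
proof (rule ccontr)
  have "(2 powr (2/3)) ^ 3 = ((2::real) powr (2/3)) powr (real 3)"
    by (rule powr_realpow[symmetric]) simp
  also have "\<dots> = 4" by (simp add: powr_powr)
  finally have cube: "(2 powr (2/3)) ^ 3 = (4::real)" .
  assume "\<not> ?thesis"
  then have "(1.6::real) ^ 3 < (2 powr (2/3)) ^ 3" by (intro power_strict_mono) auto
  then show False unfolding cube by (simp add: power3_eq_cube)
qed

lemma pow2_le_two_powr_two_thirds:
  assumes "3 * m \<le> 2 * n + 2"
  shows "(2::real) ^ m \<le> 1.6 * 2 powr (2 * real n / 3)"
proof -
  have "real m \<le> 2 * real n / 3 + 2/3" using assms by linarith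
  then have "(2::real) ^ m \<le> 2 powr (2 * real n / 3 + 2/3)"
    by (metis powr_realpow powr_mono one_le_numeral zero_less_numeral)
  also have "\<dots> \<le> 2 powr (2 * real n / 3) * 1.6"
    unfolding powr_add by (intro mult_left_mono two_powr_two_thirds_le) simp
  finally show ?thesis by simp
qed

lemma move_costs_le:
  fixes n K p q :: nat
  assumes "1 \<le> K" "n \<le> 3 * K + 2" "K + p + q + 1 \<le> n"
  shows "2 ^ p * (2 ^ (q + 1) + (real n - real K)) / real K
       + 2 ^ q * (2 ^ (0 + 1) + (real n - real (K + p))) / real (K + p)
       \<le> 2 powr (2 * real n / 3) * (10 + 2 * ln (real n))"
proof -
  define M where "M = p + q"
  have K: "0 < real K" "real K \<le> real n" using assms by auto
  have pow: "(2::real) ^ p \<le> 2 ^ M" "(2::real) ^ q \<le> 2 ^ M"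
    unfolding M_def by (intro power_increasing; simp)+
  have "2 ^ p * (2 ^ (q + 1) + (real n - real K)) = 2 ^ (M + 1) + 2 ^ p * (real n - real K)"
    unfolding M_def by (simp add: algebra_simps power_add)
  also have "\<dots> \<le> 2 ^ (M + 1) + 2 ^ M * (real n - real K)"
    using K pow by (intro add_left_mono mult_right_mono) auto
  finally have first: "2 ^ p * (2 ^ (q + 1) + (real n - real K)) \<le> 2 ^ (M + 1) + 2 ^ M * (real n - real K)" .
  have "2 ^ q * (2 ^ (0 + 1) + (real n - real (K + p))) / real (K + p)
      \<le> 2 ^ q * (2 + (real n - real K)) / real K"
    using K by (intro frac_le mult_left_mono) auto
  also have "\<dots> \<le> 2 ^ M * (2 + (real n - real K)) / real K"
    using K pow by (intro divide_right_mono mult_right_mono) auto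
  moreover have "(2 ^ (M + 1) + 2 ^ M * (real n - real K)) / real K + 2 ^ M * (2 + (real n - real K)) / real K
      = 2 ^ (M + 1) * ((real n + 2 - real K) / real K)"
    using K by (simp add: field_simps power_add)
  ultimately have "2 ^ p * (2 ^ (q + 1) + (real n - real K)) / real K
      + 2 ^ q * (2 ^ (0 + 1) + (real n - real (K + p))) / real (K + p)
      \<le> 2 ^ (M + 1) * ((real n + 2 - real K) / real K)"
    using divide_right_mono[OF first, of "real K"] K by linarith
  also have "\<dots> \<le> (1.6 * 2 powr (2 * real n / 3)) * 6"
  proof (intro mult_mono)
    have "3 * (M + 1) \<le> 2 * n + 2" unfolding M_def using assms by arith
    then show "(2::real) ^ (M + 1) \<le> 1.6 * 2 powr (2 * real n / 3)"
      by (rule pow2_le_two_powr_two_thirds)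
    have "real n + 2 \<le> 7 * real K" using assms by linarith
    then show "(real n + 2 - real K) / real K \<le> 6" using K by (simp add: divide_simps)
  qed (use K in auto)
  also have "\<dots> \<le> 2 powr (2 * real n / 3) * (10 + 2 * ln (real n))"
    using assms by (simp add: algebra_simps)
  finally show ?thesis .
qed

lemma largest_coordinate_split:
  fixes n r1 r2 r3 :: nat and a1 a2 a3 :: real
  assumes "4 \<le> n" "r1 + r2 + r3 = n - 1" "-1 < a1" "a1 < 1" "0 \<le> a2" "a1 + a2 + a3 = 1"
    and "real r2 + a2 \<le> real r1 + a1" "real r3 + a3 \<le> real r1 + a1"
  obtains K c where "real K + c = real r1 + a1" "0 \<le> c" "c < 1" "K \<le> r1" "1 \<le> K" "n \<le> 3 * K + 2"
proof -
  obtain K c where split: "real K + c = real r1 + a1" "0 \<le> c" "c < 1" "K \<le> r1"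
  proof (cases "0 \<le> a1")
    case True
    then show ?thesis using that[of r1 a1] assms by simp
  next
    case False
    then have "1 \<le> r1" using assms(5,7) by (cases r1) auto
    then show ?thesis using that[of "r1 - 1" "a1 + 1"] assms False by (auto simp: of_nat_diff)
  qed
  have "real n = real r1 + real r2 + real r3 + (a1 + a2 + a3)"
    using assms(1,2,6) by (simp add: of_nat_diff flip: of_nat_add)
  also have "\<dots> \<le> 3 * (real K + c)" using assms(7,8) split(1) by simp
  finally have "real n < 3 * real K + 3" using split(3) by simp
  then have "n \<le> 3 * K + 2" by linarith
  then show ?thesis using that split assms(1) by simp
qed

theorem theorem1:
  fixes n r1 r2 r3 :: nat and a1 a2 a3 :: real
  assumes "n \<ge> 4"
    and "r1 + r2 + r3 = n - 1"
    and "-1 < a1" and "a1 < 1"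
    and "0 \<le> a2" and "a2 < 1" and "0 \<le> a3" and "a3 < 1"
    and "a1 + a2 + a3 = 1"
    and "real r1 + a1 \<ge> real r2 + a2"
    and "real r1 + a1 \<ge> real r3 + a3"
  shows "frakL n r1 r2 r3 a1 a2 a3
           \<le> frakL n (n - 1) 0 0 a1 a2 a3 + 2 powr (2 * real n / 3) * (10 + 2 * ln (real n))"
proof -
  obtain K c where K: "real K + c = real r1 + a1" "0 \<le> c" "c < 1" "K \<le> r1" "1 \<le> K" "n \<le> 3 * K + 2"
    using largest_coordinate_split[of n r1 r2 r3 a1 a2 a3] assms by blast
  have room: "K + r2 + r3 + 1 \<le> n" using K(4) assms(1,2) by linarith
  have end_point: "real (K + r2 + r3) + c = real (n - 1) + a1"
    using K(1) assms(1,2) by (simp add: of_nat_diff flip: of_nat_add)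
  have "lebesgue_scaled n (real K + c) (real r2 + a2) (real r3 + a3)
      \<le> lebesgue_scaled n (real (K + r2) + c) a2 (real r3 + a3)
        + 2 ^ r2 * (2 ^ (r3 + 1) + (real n - real K)) / real K"
    by (rule lebesgue_scaled_move_many_le) (use assms K room in auto)
  moreover have "lebesgue_scaled n (real (K + r2) + c) (real r3 + a3) a2
      \<le> lebesgue_scaled n (real (K + r2 + r3) + c) a3 a2
        + 2 ^ r3 * (2 ^ (0 + 1) + (real n - real (K + r2))) / real (K + r2)"
    by (rule lebesgue_scaled_move_many_le) (use assms K room in auto)
  ultimately show ?thesis
    using move_costs_le[OF K(5,6) room] assms(1)
    unfolding frakL_def lebesgue_eq_lebesgue_scaled K(1)[symmetric] end_point[symmetric]
    by (simp add: lebesgue_scaled_commute[of n _ a2])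
qed

end
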